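(* For each $c>0$ let $\alpha_c,\beta_c,\gamma:\mathbb{R}^n\times\mathbb{S}^m\to\mathbb{R}$ satisfy conditions (a)–(e) below, and let $\mathcal{A}_c(x,\Lambda):=f(x)+\alpha_c(x,\Lambda)\,\varphi(G(x),\beta_c(x,\Lambda)\Lambda)+\gamma(x,\Lambda)$ with $\varphi(Y,Z)=\|P(Z/2-Y)\|_F^2-\|Z\|_F^2/4$. Conditions: (a) $\alpha_c,\beta_c,\gamma$ are continuously differentiable for all $c>0$; (b) $\alpha_c(x,\Lambda)>0$ for all $x$ feasible for (NSDP), all $\Lambda$, all $c>0$; and for every KKT pair $(\bar x,\bar\Lambda)$ of (NSDP): (c) $\alpha_c(\bar x,\bar\Lambda)\beta_c(\bar x,\bar\Lambda)=1$ for all $c>0$; (d) $\gamma(\bar x,\bar\Lambda)=0$, $\nabla_x\gamma(\bar x,\bar\Lambda)=0$, $\nabla_\Lambda\gamma(\bar x,\bar\Lambda)=0$; (e) there exist neighborhoods $V_{\bar x}$, $V_{\bar\Lambda}$ of $\bar x,\bar\Lambda$ and a continuous $\Gamma:V_{\bar x}\to V_{\bar\Lambda}$ with $\Gamma(\bar x)=\bar\Lambda$ and $\gamma(x,\Gamma(x))=0$ for all $x\in V_{\bar x}$. Assume moreover that $G_{\mathrm{NSDP}}\neq\emptyset$, that $G_{\mathrm{NLP}}(c)\neq\emptyset$ for all $c>0$, and that for every $x\in G_{\mathrm{NSDP}}$ there is at least one $\Lambda\in\mathbb{S}^m$ such that $(x,\Lambda)$ is a KKT pair of (NSDP). Then for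 every $c>0$, $G_{\mathrm{NLP}}(c)\subseteq\tilde G_{\mathrm{NSDP}}$ implies $G_{\mathrm{NLP}}(c)=\tilde G_{\mathrm{NSDP}}$.
   Context: $\mathbb{S}^m$ is the space of real symmetric $m\times m$ matrices with inner product $\langle Y,Z\rangle=\operatorname{tr}(YZ)$ and Frobenius norm; $\mathbb{S}^m_+$ is the PSD cone and $P$ the orthogonal projection onto it. $f:\mathbb{R}^n\to\mathbb{R}$, $G:\mathbb{R}^n\to\mathbb{S}^m$ are twice continuously differentiable; (NSDP) is: minimize $f(x)$ s.t. $G(x)\in\mathbb{S}^m_+$. $\nabla G(x)^*Z=(\langle\partial G(x)/\partial x_i,Z\rangle)_{i=1}^n$; $L(x,\Lambda)=f(x)-\langle G(x),\Lambda\rangle$. With $Y\circ Z=(YZ+ZY)/2$, $(x,\Lambda)$ is a KKT pair of (NSDP) if $\nabla f(x)-\nabla G(x)^*\Lambda=0$, $\Lambda\circ G(x)=0$, $G(x)\in\mathbb{S}^m_+$, $\Lambda\in\mathbb{S}^m_+$; then $\Lambda$ is called a Lagrange multiplier corresponding to $x$. $G_{\mathrm{NSDP}}$ is the set of global minimizers of (NSDP); $G_{\mathrm{NLP}}(c)$ is the set of global minimizers of $\mathcal{A}_c$ over $\mathbb{R}^n\times\mathbb{S}^m$; $\tilde G_{\mathrm{NSDP}}:=\{(x,\Lambda): x\in G_{\mathrm{NSDP}}\text{ and }\Lambda\text{ is a corresponding Lagrange multiplier}\}$. *)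

theory Defs
  imports "HOL-Analysis.Analysis"
begin

text \<open>Real m x m matrices are modelled as real^'m^'m.  The library norm on this
type is the Frobenius norm and the library inner product is tr(Y^T Z), which equals
tr(YZ) on symmetric matrices.\<close>

definition Sym :: "(real^'m^'m) set" where
  "Sym = {A. transpose A = A}"

definition PSD :: "(real^'m^'m) set" where
  "PSD = {A. A \<in> Sym \<and> (\<forall>v. 0 \<le> v \<bullet> (A *v v))}"

definition projPSD :: "real^'m^'m \<Rightarrow> real^'m^'m" where
  "projPSD Y = closest_point PSD Y"

definition jordan :: "real^'m^'m \<Rightarrow> real^'m^'m \<Rightarrow> real^'m^'m" where
  "jordan Y Z = (1/2) *\<^sub>R (Y ** Z + Z ** Y)"

definition phi :: "real^'m^'m \<Rightarrow> real^'m^'m \<Rightarrow> real" where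
  "phi Y Z = (norm (projPSD ((1/2) *\<^sub>R Z - Y)))\<^sup>2 - (norm Z)\<^sup>2 / 4"

definition C2 :: "('a::real_normed_vector \<Rightarrow> 'b::real_normed_vector) \<Rightarrow> bool" where
  "C2 g \<longleftrightarrow> (\<exists>Dg D2g.
     (\<forall>x. (g has_derivative blinfun_apply (Dg x)) (at x)) \<and>
     (\<forall>x. (Dg has_derivative blinfun_apply (D2g x)) (at x)) \<and>
     continuous_on UNIV D2g)"

definition C1_within :: "'a::real_normed_vector set \<Rightarrow> ('a \<Rightarrow> 'b::real_normed_vector) \<Rightarrow> bool" where
  "C1_within S g \<longleftrightarrow> (\<exists>Dg.
     (\<forall>p\<in>S. (g has_derivative blinfun_apply (Dg p)) (at p within S)) \<and>
     continuous_on S Dg)"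

definition Dom :: "((real^'n) \<times> (real^'m^'m)) set" where
  "Dom = UNIV \<times> Sym"

definition KKT :: "(real^'n \<Rightarrow> real) \<Rightarrow> (real^'n \<Rightarrow> real^'m^'m) \<Rightarrow> real^'n \<Rightarrow> real^'m^'m \<Rightarrow> bool" where
  "KKT f G x L \<longleftrightarrow>
     (\<forall>i. frechet_derivative f (at x) (axis i 1) - (frechet_derivative G (at x) (axis i 1)) \<bullet> L = 0) \<and>
     jordan L (G x) = 0 \<and> G x \<in> PSD \<and> L \<in> PSD"

definition G_NSDP :: "(real^'n \<Rightarrow> real) \<Rightarrow> (real^'n \<Rightarrow> real^'m^'m) \<Rightarrow> (real^'n) set" where
  "G_NSDP f G = {x. G x \<in> PSD \<and> (\<forall>y. G y \<in> PSD \<longrightarrow> f x \<le> f y)}"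

definition tG_NSDP :: "(real^'n \<Rightarrow> real) \<Rightarrow> (real^'n \<Rightarrow> real^'m^'m) \<Rightarrow> ((real^'n) \<times> (real^'m^'m)) set" where
  "tG_NSDP f G = {(x, L). x \<in> G_NSDP f G \<and> KKT f G x L}"

definition Aug :: "(real^'n \<Rightarrow> real) \<Rightarrow> (real^'n \<Rightarrow> real^'m^'m) \<Rightarrow>
    ((real^'n) \<times> (real^'m^'m) \<Rightarrow> real) \<Rightarrow> ((real^'n) \<times> (real^'m^'m) \<Rightarrow> real) \<Rightarrow>
    ((real^'n) \<times> (real^'m^'m) \<Rightarrow> real) \<Rightarrow> (real^'n) \<times> (real^'m^'m) \<Rightarrow> real" where
  "Aug f G \<alpha> \<beta> \<gamma> p = f (fst p) + \<alpha> p * phi (G (fst p)) (\<beta> p *\<^sub>R snd p) + \<gamma> p"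

definition G_NLP :: "(real^'n \<Rightarrow> real) \<Rightarrow> (real^'n \<Rightarrow> real^'m^'m) \<Rightarrow>
    ((real^'n) \<times> (real^'m^'m) \<Rightarrow> real) \<Rightarrow> ((real^'n) \<times> (real^'m^'m) \<Rightarrow> real) \<Rightarrow>
    ((real^'n) \<times> (real^'m^'m) \<Rightarrow> real) \<Rightarrow> ((real^'n) \<times> (real^'m^'m)) set" where
  "G_NLP f G \<alpha> \<beta> \<gamma> = {p \<in> Dom. \<forall>q\<in>Dom. Aug f G \<alpha> \<beta> \<gamma> p \<le> Aug f G \<alpha> \<beta> \<gamma> q}"

end

theory Submission imports Defs begin

text \<open>At a KKT pair \<open>(x, \<Lambda>)\<close> complementarity gives \<open>\<langle>G x, \<Lambda>\<rangle> = 0\<close>; since the PSD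
cone is self-dual, \<open>\<beta>\<Lambda>/2\<close> is then the projection of \<open>\<beta>\<Lambda>/2 - G x\<close> onto it, so the
penalty term \<open>\<phi>(G x, \<beta>\<Lambda>)\<close> vanishes and, with \<open>\<gamma>(x, \<Lambda>) = 0\<close>, the augmented
Lagrangian equals \<open>f x\<close>.  So it takes the optimal value of (NSDP) at every global
minimizer with a multiplier; if one of its own global minimizers is such a pair, that
value is its minimum, and every such pair is a global minimizer.\<close>

lemma axis_inner_matrix_vector_axis: "axis i 1 \<bullet> ((Y::real^'m^'m) *v axis j 1) = Y$i$j"
  by (simp add: matrix_vector_mult_basis inner_commute[of "axis i 1"] inner_axis column_def)

lemma Sym_entry_commute: "Y \<in> Sym \<Longrightarrow> Y$i$j = Y$j$i"
  unfolding Sym_def by (metis (mono_tags) mem_Collect_eq transpose_def vec_lambda_beta)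

lemma Sym_inner_matrix_vector_commute:
  fixes Y :: "real^'m^'m"
  assumes "Y \<in> Sym"
  shows "u \<bullet> (Y *v w) = w \<bullet> (Y *v u)"
proof -
  have "u \<bullet> (Y *v w) = (Finite_Cartesian_Product.transpose Y *v u) \<bullet> w"
    by (simp only: dot_lmul_matrix transpose_matrix_vector)
  also have "\<dots> = w \<bullet> (Y *v u)"
    using assms by (simp add: Sym_def inner_commute)
  finally show ?thesis .
qed

lemma Sym_quadratic_form_add:
  fixes Y :: "real^'m^'m"
  assumes "Y \<in> Sym"
  shows "(u + t *\<^sub>R w) \<bullet> (Y *v (u + t *\<^sub>R w)) =
     u \<bullet> (Y *v u) + 2 * t * (w \<bullet> (Y *v u)) + t^2 * (w \<bullet> (Y *v w))"
  using Sym_inner_matrix_vector_commute[OF assms, of u w]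
  by (simp add: matrix_vector_right_distrib matrix_vector_mult_scaleR inner_add_left
      inner_add_right power2_eq_square algebra_simps)

lemma PSD_imp_Sym: "Y \<in> PSD \<Longrightarrow> Y \<in> Sym"
  unfolding PSD_def by simp

lemma PSD_diag_nonneg: "Y \<in> PSD \<Longrightarrow> 0 \<le> Y$k$k"
  unfolding PSD_def by (metis (mono_tags) axis_inner_matrix_vector_axis mem_Collect_eq)

lemma PSD_scaleR: "A \<in> PSD \<Longrightarrow> 0 \<le> c \<Longrightarrow> c *\<^sub>R (A::real^'m^'m) \<in> PSD"
  unfolding PSD_def Sym_def
  by (auto simp: transpose_def vec_eq_iff scaleR_matrix_vector_assoc[symmetric])

lemma PSD_zero_diag_imp_zero_entry:
  fixes Y :: "real^'m^'m"
  assumes Y: "Y \<in> PSD" and diag: "Y$j$j = 0"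
  shows "Y$i$j = 0"
proof (rule ccontr)
  assume ne: "Y$i$j \<noteq> 0"
  have sym: "Y \<in> Sym" using Y by (rule PSD_imp_Sym)
  define t where "t = - (Y$i$i + 1) / (2 * Y$i$j)"
  have "0 \<le> (axis i 1 + t *\<^sub>R axis j 1) \<bullet> (Y *v (axis i 1 + t *\<^sub>R axis j 1))"
    using Y unfolding PSD_def by blast
  also have "\<dots> = Y$i$i + 2 * t * Y$j$i + t^2 * Y$j$j"
    by (simp only: Sym_quadratic_form_add[OF sym] axis_inner_matrix_vector_axis)
  also have "\<dots> = -1"
    using ne diag Sym_entry_commute[OF sym, of i j] by (simp add: t_def field_simps)
  finally show False by simp
qed

definition outer_square :: "real^'m \<Rightarrow> real^'m^'m" where
  "outer_square y = (\<chi> i j. y$i * y$j)"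

lemma outer_square_inner: "outer_square y \<bullet> W = y \<bullet> (W *v y)"
  by (simp add: outer_square_def inner_vec_def matrix_vector_mult_def sum_distrib_left mult_ac)

lemma outer_square_matrix_vector: "outer_square y *v v = (y \<bullet> v) *\<^sub>R y"
  by (simp add: outer_square_def vec_eq_iff inner_vec_def matrix_vector_mult_def
      sum_distrib_left mult_ac)

text \<open>One step of symmetric Gaussian elimination on the pivot \<open>Y$k$k\<close>: the Schur
complement \<open>v\<^sup>T Y' v\<close> equals \<open>w\<^sup>T Y w\<close> for \<open>w = v - (y\<^sup>T v / d) e\<^sub>k\<close>.\<close>
lemma PSD_eliminate_pivot:
  fixes Y :: "real^'m^'m"
  assumes Y: "Y \<in> PSD" and pivot: "0 < Y$k$k"
    and Y': "Y' = Y - (1 / Y$k$k) *\<^sub>R outer_square (column k Y)"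
  shows "Y' \<in> PSD" and "{j. Y'$j$j \<noteq> 0} \<subseteq> {j. Y$j$j \<noteq> 0} - {k}"
proof -
  define d where "d = Y$k$k"
  define y where "y = column k Y"
  have sym: "Y \<in> Sym" using Y by (rule PSD_imp_Sym)
  have entry: "Y'$i$j = Y$i$j - Y$i$k * Y$j$k / d" for i j
    by (simp add: Y' d_def outer_square_def column_def)
  have "Finite_Cartesian_Product.transpose Y' = Y'"
    using entry Sym_entry_commute[OF sym] by (simp add: transpose_def vec_eq_iff mult.commute)
  then have Y'_Sym: "Y' \<in> Sym" unfolding Sym_def by simp
  have y_inner: "y \<bullet> v = axis k 1 \<bullet> (Y *v v)" for v
    using Sym_inner_matrix_vector_commute[OF sym, of "axis k 1" v]
    by (simp add: y_def matrix_vector_mult_basis inner_commute)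
  have "v \<bullet> (Y' *v v) = w \<bullet> (Y *v w)" if "w = v + (- (y \<bullet> v) / d) *\<^sub>R axis k 1" for v w
  proof -
    have "v \<bullet> (Y' *v v) = v \<bullet> (Y *v v) - (y \<bullet> v)^2 / d"
      by (simp add: Y' d_def y_def matrix_vector_mult_diff_rdistrib outer_square_matrix_vector
          scaleR_matrix_vector_assoc[symmetric] inner_diff_right power2_eq_square inner_commute)
    also have "\<dots> = w \<bullet> (Y *v w)"
      unfolding that Sym_quadratic_form_add[OF sym] using pivot
      by (simp add: axis_inner_matrix_vector_axis y_inner[symmetric] d_def[symmetric]
          power2_eq_square field_simps)
    finally show ?thesis .
  qed
  then show "Y' \<in> PSD"
    using Y'_Sym Y unfolding PSD_def by auto
  show "{j. Y'$j$j \<noteq> 0} \<subseteq> {j. Y$j$j \<noteq> 0} - {k}"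
  proof
    fix j assume "j \<in> {j. Y'$j$j \<noteq> 0}"
    then have ne: "Y'$j$j \<noteq> 0" by simp
    have "j \<noteq> k" using ne entry[of k k] pivot d_def by auto
    moreover have "Y$j$j \<noteq> 0"
    proof
      assume "Y$j$j = 0"
      then have "Y$j$k = 0"
        using PSD_zero_diag_imp_zero_entry[OF Y] Sym_entry_commute[OF sym, of j k] by metis
      then show False using ne entry[of j j] \<open>Y$j$j = 0\<close> by simp
    qed
    ultimately show "j \<in> {j. Y$j$j \<noteq> 0} - {k}" by simp
  qed
qed

text \<open>Self-duality of the PSD cone, by induction on the number of nonzero diagonal
entries: eliminating a pivot writes \<open>Y\<close> as a PSD matrix with fewer of them plus a
nonnegative multiple of a rank-one matrix \<open>y y\<^sup>T\<close>, and \<open>\<langle>y y\<^sup>T, W\<rangle> = y\<^sup>T W y \<ge> 0\<close>.\<close>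
lemma PSD_inner_nonneg:
  fixes Y W :: "real^'m^'m"
  assumes "Y \<in> PSD" and W: "W \<in> PSD"
  shows "0 \<le> Y \<bullet> W"
  using assms(1)
proof (induction "card {k. Y$k$k \<noteq> 0}" arbitrary: Y rule: less_induct)
  case less
  show ?case
  proof (cases "\<exists>k. Y$k$k \<noteq> 0")
    case False
    then have "Y = 0" using PSD_zero_diag_imp_zero_entry[OF less.prems] by (simp add: vec_eq_iff)
    then show ?thesis by simp
  next
    case True
    then obtain k where k: "Y$k$k \<noteq> 0" by blast
    define d where "d = Y$k$k"
    have d: "0 < d" using PSD_diag_nonneg[OF less.prems, of k] k d_def by simp
    define Y' where "Y' = Y - (1 / d) *\<^sub>R outer_square (column k Y)"
    note elim = PSD_eliminate_pivot[OF less.prems d[unfolded d_def] Y'_def[unfolded d_def]]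
    have "card {j. Y'$j$j \<noteq> 0} \<le> card ({j. Y$j$j \<noteq> 0} - {k})"
      by (rule card_mono[OF _ elim(2)]) simp
    also have "\<dots> < card {j. Y$j$j \<noteq> 0}" using k by (intro card_Diff1_less) simp_all
    finally have "0 \<le> Y' \<bullet> W" using less.hyps elim(1) by blast
    moreover have "Y \<bullet> W = Y' \<bullet> W + (1 / d) * (column k Y \<bullet> (W *v column k Y))"
      by (simp add: Y'_def inner_diff_left outer_square_inner)
    moreover have "0 \<le> column k Y \<bullet> (W *v column k Y)" using W unfolding PSD_def by auto
    ultimately show ?thesis using d by simp
  qed
qed

lemma jordan_eq_0_imp_inner_eq_0:
  fixes L Y :: "real^'m^'m"
  assumes jordan: "jordan L Y = 0" and L: "L \<in> Sym" and Y: "Y \<in> Sym"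
  shows "L \<bullet> Y = 0"
proof -
  have "(L ** Y + Y ** L)$i$i = 2 * (L$i \<bullet> Y$i)" for i
    by (simp add: matrix_matrix_mult_def inner_vec_def Sym_entry_commute[OF Y, of _ i]
        Sym_entry_commute[OF L, of _ i] mult.commute)
  moreover have "(L ** Y + Y ** L)$i$i = 0" for i
    using jordan unfolding jordan_def by (simp add: vec_eq_iff)
  ultimately show ?thesis by (simp add: inner_vec_def)
qed

lemma closest_point_diff_normal:
  fixes S :: "'a::{real_inner,heine_borel} set"
  assumes h: "h \<in> S" and orth: "h \<bullet> y = 0" and dual: "\<And>w. w \<in> S \<Longrightarrow> 0 \<le> w \<bullet> y"
  shows "closest_point S (h - y) = h"
proof -
  have bound: "(norm y)^2 + (norm (h - w))^2 \<le> (dist (h - y) w)^2" if "w \<in> S" for w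
  proof -
    have "(dist (h - y) w)^2 = (norm (h - w))^2 + 2 * (w \<bullet> y) + (norm y)^2"
      using orth by (simp add: dist_norm power2_norm_eq_inner algebra_simps inner_commute)
    then show ?thesis using dual[OF that] by simp
  qed
  have dist_h: "dist (h - y) h = norm y" by (simp add: dist_norm)
  show ?thesis
    unfolding closest_point_def
  proof (rule some_equality)
    show "h \<in> S \<and> (\<forall>w\<in>S. dist (h - y) h \<le> dist (h - y) w)"
      using h bound dist_h
      by (smt (verit, best) power2_le_imp_le zero_le_dist zero_le_power2)
  next
    fix w assume w: "w \<in> S \<and> (\<forall>z\<in>S. dist (h - y) w \<le> dist (h - y) z)"
    then have "dist (h - y) w \<le> norm y" using h dist_h by metis
    then have "(dist (h - y) w)^2 \<le> (norm y)^2" by (simp add: power_mono)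
    with bound[of w] w have "(norm (h - w))^2 \<le> 0" by linarith
    then show "w = h" by simp
  qed
qed

lemma phi_complementary_eq_0:
  fixes Y Z :: "real^'m^'m"
  assumes Y: "Y \<in> PSD" and Z: "Z \<in> PSD" and orth: "Y \<bullet> Z = 0"
  shows "phi Y Z = 0"
proof -
  have "projPSD ((1/2) *\<^sub>R Z - Y) = (1/2) *\<^sub>R Z"
    unfolding projPSD_def
    by (rule closest_point_diff_normal)
      (use PSD_scaleR[OF Z] orth PSD_inner_nonneg[OF _ Y] in \<open>auto simp: inner_commute\<close>)
  then show ?thesis by (simp add: phi_def power2_eq_square)
qed

lemma KKT_complementary:
  assumes "KKT f G x L"
  shows "G x \<in> PSD" and "L \<in> PSD" and "G x \<bullet> L = 0"
  using assms jordan_eq_0_imp_inner_eq_0[of L "G x"] PSD_imp_Sym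
  by (auto simp: KKT_def inner_commute)

lemma Aug_at_KKT:
  assumes "KKT f G x L" and "0 < \<beta> (x, L)" and "\<gamma> (x, L) = 0"
  shows "Aug f G \<alpha> \<beta> \<gamma> (x, L) = f x"
proof -
  note KKT = KKT_complementary[OF assms(1)]
  have "phi (G x) (\<beta> (x, L) *\<^sub>R L) = 0"
    using KKT assms(2) by (intro phi_complementary_eq_0 PSD_scaleR) auto
  then show ?thesis using assms(3) by (simp add: Aug_def)
qed

theorem lemma3p7:
  fixes f :: "real^'n \<Rightarrow> real"
    and G :: "real^'n \<Rightarrow> real^'m^'m"
    and \<alpha> \<beta> :: "real \<Rightarrow> (real^'n) \<times> (real^'m^'m) \<Rightarrow> real"
    and \<gamma> :: "(real^'n) \<times> (real^'m^'m) \<Rightarrow> real"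
  assumes fC2: "C2 f" and GC2: "C2 G" and Gsym: "\<And>x. G x \<in> Sym"
    and a: "\<And>c. c > 0 \<Longrightarrow> C1_within Dom (\<alpha> c) \<and> C1_within Dom (\<beta> c)"
    and a_gamma: "C1_within Dom \<gamma>"
    and b: "\<And>c x L. c > 0 \<Longrightarrow> G x \<in> PSD \<Longrightarrow> L \<in> Sym \<Longrightarrow> \<alpha> c (x, L) > 0"
    and c: "\<And>c xb Lb. KKT f G xb Lb \<Longrightarrow> c > 0 \<Longrightarrow> \<alpha> c (xb, Lb) * \<beta> c (xb, Lb) = 1"
    and d: "\<And>xb Lb. KKT f G xb Lb \<Longrightarrow>
              \<gamma> (xb, Lb) = 0 \<and> (\<gamma> has_derivative (\<lambda>_. 0)) (at (xb, Lb) within Dom)"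
    and e: "\<And>xb Lb. KKT f G xb Lb \<Longrightarrow>
              \<exists>Vx VL \<Gamma>. open Vx \<and> xb \<in> Vx \<and> open VL \<and> Lb \<in> VL \<and>
                 continuous_on Vx \<Gamma> \<and> \<Gamma> ` Vx \<subseteq> VL \<inter> Sym \<and> \<Gamma> xb = Lb \<and>
                 (\<forall>x\<in>Vx. \<gamma> (x, \<Gamma> x) = 0)"
    and ne1: "G_NSDP f G \<noteq> {}"
    and ne2: "\<And>c. c > 0 \<Longrightarrow> G_NLP f G (\<alpha> c) (\<beta> c) \<gamma> \<noteq> {}"
    and mult: "\<And>x. x \<in> G_NSDP f G \<Longrightarrow> \<exists>L. L \<in> Sym \<and> KKT f G x L"
  shows "\<forall>c>0. G_NLP f G (\<alpha> c) (\<beta> c) \<gamma> \<subseteq> tG_NSDP f G \<longrightarrow>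
           G_NLP f G (\<alpha> c) (\<beta> c) \<gamma> = tG_NSDP f G"
proof (intro allI impI)
  fix c :: real
  assume c_pos: "c > 0" and sub: "G_NLP f G (\<alpha> c) (\<beta> c) \<gamma> \<subseteq> tG_NSDP f G"
  let ?A = "Aug f G (\<alpha> c) (\<beta> c) \<gamma>"
  have value_at_KKT: "?A (x, L) = f x" if "KKT f G x L" for x L
  proof (rule Aug_at_KKT[OF that])
    note KKT = KKT_complementary[OF that]
    have "0 < \<alpha> c (x, L)" using b[OF c_pos KKT(1) PSD_imp_Sym[OF KKT(2)]] .
    then show "0 < \<beta> c (x, L)" using c[OF that c_pos] by (metis zero_less_mult_pos zero_less_one)
    show "\<gamma> (x, L) = 0" using d[OF that] by simp
  qed
  obtain x L where min: "(x, L) \<in> G_NLP f G (\<alpha> c) (\<beta> c) \<gamma>" using ne2[OF c_pos] by auto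
  have "tG_NSDP f G \<subseteq> G_NLP f G (\<alpha> c) (\<beta> c) \<gamma>"
  proof (clarify)
    fix y M assume "(y, M) \<in> tG_NSDP f G"
    moreover have "(x, L) \<in> tG_NSDP f G" using min sub by auto
    ultimately have "?A (y, M) = ?A (x, L)" and "M \<in> Sym"
      using value_at_KKT KKT_complementary(2)[of f G y M] PSD_imp_Sym
      by (auto simp: tG_NSDP_def G_NSDP_def intro: order_antisym)
    then show "(y, M) \<in> G_NLP f G (\<alpha> c) (\<beta> c) \<gamma>" using min by (simp add: G_NLP_def Dom_def)
  qed
  then show "G_NLP f G (\<alpha> c) (\<beta> c) \<gamma> = tG_NSDP f G" using sub by blast
qed

end
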